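(* Let $\tau$ be a traversal sequence, and let $\mathbf{w}=\langle w^1,\dots,w^n\rangle$ and $\tilde{\mathbf{w}}=\langle\tilde w^1,\dots,\tilde w^n\rangle$ be two sequences of tasks such that $\tilde w^i_s\le w^i_s$ for every $i\in\{1,\dots,n\}$ and every state $s$. Then the total work done by the fractional traversal algorithm with respect to $\tau$ and $\mathbf{w}$ is at least the total work done with respect to $\tau$ and $\tilde{\mathbf{w}}$.
   Context: A metrical task system has states $S=\{1,\dots,m\}$ and a symmetric non-negative matrix $(d_{st})$ with $d_{ss}=0$ satisfying the triangle inequality. A task is a vector $w\in\mathbb{R}_{\ge0}^m$. A traversal sequence is an infinite sequence $\tau=\tau_1,\tau_2,\dots$ of states. Write $\delta_{\ell,\ell'}=\sum_{j=\min(\ell,\ell')}^{\max(\ell,\ell')-1}d_{\tau_j\tau_{j+1}}$. Fractional traversal algorithm on $\tau$: it keeps a position $j$ (initially $t_0=1$) and the work $\rho$ done at the current position since arriving there (initially $0$). On a task $w$, with remaining fraction $f=1$, it repeats while $f>0$: $\lambda\gets\min\{(d_{\tau_j\tau_{j+1}}-\rho)/w_{\tau_j},\,f\}$ (interpreted as $f$ if $w_{\tau_j}=0$), $\rho\gets\rho+\lambda w_{\tau_j}$ (work $\lambda w_{\tau_j}$ is done in state $\tau_j$), $f\gets f-\lambda$, and if $\rho=d_{\tau_j\tau_{j+1}}$ then $j\gets j+1$, $\rho\gets0$. If $t_n$ is the position after processing $n$ tasks and $\rho_{t_n}$ the current value of $\rho$, the total work done is $\delta_{t_0,t_n}+\rho_{t_n}$.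 *)

theory Defs
  imports Complex_Main
begin

definition is_mts :: "nat \<Rightarrow> (nat \<Rightarrow> nat \<Rightarrow> real) \<Rightarrow> bool" where
  "is_mts m d \<longleftrightarrow>
     (\<forall>s\<in>{1..m}. \<forall>t\<in>{1..m}. d s t \<ge> 0 \<and> d s t = d t s) \<and>
     (\<forall>s\<in>{1..m}. d s s = 0) \<and>
     (\<forall>s\<in>{1..m}. \<forall>t\<in>{1..m}. \<forall>u\<in>{1..m}. d s u \<le> d s t + d t u)"

definition delta :: "(nat \<Rightarrow> nat \<Rightarrow> real) \<Rightarrow> (nat \<Rightarrow> nat) \<Rightarrow> nat \<Rightarrow> nat \<Rightarrow> real" where
  "delta d \<tau> l l' = (\<Sum>j\<in>{min l l'..<max l l'}. d (\<tau> j) (\<tau> (Suc j)))"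

text \<open>One iteration of the inner loop, on configuration (j, rho, f);
  w is the current task (a function on states).\<close>
definition ft_step :: "(nat \<Rightarrow> nat \<Rightarrow> real) \<Rightarrow> (nat \<Rightarrow> nat) \<Rightarrow> (nat \<Rightarrow> real)
    \<Rightarrow> nat \<times> real \<times> real \<Rightarrow> nat \<times> real \<times> real" where
  "ft_step d \<tau> w c = (case c of (j, \<rho>, f) \<Rightarrow>
     (let D = d (\<tau> j) (\<tau> (Suc j));
          lam = (if w (\<tau> j) = 0 then f else min ((D - \<rho>) / w (\<tau> j)) f);
          \<rho>1 = \<rho> + lam * w (\<tau> j);
          f1 = f - lam
      in if \<rho>1 = D then (Suc j, 0, f1) else (j, \<rho>1, f1)))"

text \<open>ft_loop d tau w (j,rho,f) (j',rho'): the loop "while f > 0" started in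
  configuration (j,rho,f) terminates with position j' and work rho'.\<close>
inductive ft_loop :: "(nat \<Rightarrow> nat \<Rightarrow> real) \<Rightarrow> (nat \<Rightarrow> nat) \<Rightarrow> (nat \<Rightarrow> real)
    \<Rightarrow> nat \<times> real \<times> real \<Rightarrow> nat \<times> real \<Rightarrow> bool"
  for d \<tau> w where
  stop: "\<not> f > 0 \<Longrightarrow> ft_loop d \<tau> w (j, \<rho>, f) (j, \<rho>)"
| iter: "f > 0 \<Longrightarrow> ft_loop d \<tau> w (ft_step d \<tau> w (j, \<rho>, f)) r \<Longrightarrow> ft_loop d \<tau> w (j, \<rho>, f) r"

text \<open>ft_after d tau ws i (t, rho): after processing tasks ws 1, ..., ws i
  (task i is the function ws i on states), starting from t_0 = 1 and rho = 0,
  the algorithm is at position t with current work rho.\<close>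
inductive ft_after :: "(nat \<Rightarrow> nat \<Rightarrow> real) \<Rightarrow> (nat \<Rightarrow> nat) \<Rightarrow> (nat \<Rightarrow> nat \<Rightarrow> real)
    \<Rightarrow> nat \<Rightarrow> nat \<times> real \<Rightarrow> bool"
  for d \<tau> ws where
  init: "ft_after d \<tau> ws 0 (1, 0)"
| task: "ft_after d \<tau> ws i (j, \<rho>) \<Longrightarrow> ft_loop d \<tau> (ws (Suc i)) (j, \<rho>, 1) r
          \<Longrightarrow> ft_after d \<tau> ws (Suc i) r"

definition ft_total_work :: "(nat \<Rightarrow> nat \<Rightarrow> real) \<Rightarrow> (nat \<Rightarrow> nat) \<Rightarrow> (nat \<Rightarrow> nat \<Rightarrow> real)
    \<Rightarrow> nat \<Rightarrow> real \<Rightarrow> bool" where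
  "ft_total_work d \<tau> ws n W \<longleftrightarrow>
     (\<exists>t \<rho>. ft_after d \<tau> ws n (t, \<rho>) \<and> W = delta d \<tau> 1 t + \<rho>)"

end

theory Submission
  imports Defs "HOL-Library.Product_Lexorder"
begin

text \<open>Compare configurations \<open>(j, \<rho>)\<close> lexicographically: position first, then the work
  done there. By induction over tasks and loop iterations, the run on the lighter tasks never
  overtakes the run on the heavier ones while having at most as much of the current task left:
  in a common segment the lighter task does no more work per unit of fraction, so it needs at
  least as much fraction to finish the segment. Total work is monotone in this order.\<close>

fun ft_valid :: "(nat \<Rightarrow> nat \<Rightarrow> real) \<Rightarrow> (nat \<Rightarrow> nat) \<Rightarrow> nat \<times> real \<Rightarrow> bool" where
  "ft_valid d \<tau> (j, \<rho>) \<longleftrightarrow> 1 \<le> j \<and> 0 \<le> \<rho> \<and> \<rho> \<le> d (\<tau> j) (\<tau> (Suc j))"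

definition step_fraction :: "real \<Rightarrow> real \<Rightarrow> real \<Rightarrow> real \<Rightarrow> real" where
  "step_fraction D \<rho> v f = (if v = 0 then f else min ((D - \<rho>) / v) f)"

lemma ft_step_eq:
  "ft_step d \<tau> w (j, \<rho>, f) =
    (let D = d (\<tau> j) (\<tau> (Suc j)); v = w (\<tau> j); l = step_fraction D \<rho> v f in
     if \<rho> + l * v = D then (Suc j, 0, f - l) else (j, \<rho> + l * v, f - l))"
  unfolding ft_step_def step_fraction_def Let_def by simp

lemma step_fraction_bounds:
  assumes "\<rho> \<le> D" "0 \<le> v" "0 \<le> f"
  shows "0 \<le> step_fraction D \<rho> v f" "step_fraction D \<rho> v f \<le> f"
  using assms by (auto simp: step_fraction_def)

lemma step_fraction_within_segment:
  assumes "\<rho> \<le> D" "0 \<le> v"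
  shows "\<rho> + step_fraction D \<rho> v f * v \<le> D"
  using assms by (auto simp: step_fraction_def min_def field_simps)

lemma step_fraction_eq_if_segment_unfinished:
  "\<rho> + step_fraction D \<rho> v f * v \<noteq> D \<Longrightarrow> step_fraction D \<rho> v f = f"
  by (auto simp: step_fraction_def min_def split: if_splits)

lemma step_fraction_remaining_mono:
  assumes "\<sigma> \<le> \<rho>" "\<rho> \<le> D" "0 \<le> u" "u \<le> v" "0 \<le> g" "g \<le> f"
  shows "g - step_fraction D \<sigma> u g \<le> f - step_fraction D \<rho> v f"
proof (cases "step_fraction D \<sigma> u g < g")
  case True
  then have u: "0 < u" "step_fraction D \<sigma> u g = (D - \<sigma>) / u"
    using assms by (auto simp: step_fraction_def min_def split: if_splits)
  then have "0 < v" using assms by linarith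
  then have "step_fraction D \<rho> v f \<le> (D - \<rho>) / v"
    by (simp add: step_fraction_def)
  also have "\<dots> \<le> (D - \<sigma>) / u"
    using u \<open>0 < v\<close> assms by (intro frac_le) auto
  finally show ?thesis using u assms by linarith
next
  case False
  then show ?thesis
    using step_fraction_bounds[of \<rho> D v f] assms by linarith
qed

lemma ft_step_progress:
  assumes "ft_valid d \<tau> (j, \<rho>)" "0 \<le> f" "0 \<le> w (\<tau> j)"
    and "0 \<le> d (\<tau> (Suc j)) (\<tau> (Suc (Suc j)))"
    and "ft_step d \<tau> w (j, \<rho>, f) = (j', \<rho>', f')"
  shows "ft_valid d \<tau> (j', \<rho>')" "(j, \<rho>) \<le> (j', \<rho>')" "(j', \<rho>') \<le> (Suc j, 0)"
    "0 \<le> f'" "f' \<le> f"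
proof -
  define D v l where "D = d (\<tau> j) (\<tau> (Suc j))" and "v = w (\<tau> j)"
    and "l = step_fraction D \<rho> v f"
  have step: "(j', \<rho>', f') =
      (if \<rho> + l * v = D then (Suc j, 0, f - l) else (j, \<rho> + l * v, f - l))"
    using assms(5) unfolding ft_step_eq Let_def D_def v_def l_def by (rule sym)
  have "\<rho> \<le> D" "0 \<le> v" using assms(1,3) by (simp_all add: D_def v_def)
  then have "0 \<le> l" "l \<le> f" "\<rho> + l * v \<le> D"
    using step_fraction_bounds step_fraction_within_segment assms(2) by (auto simp: l_def)
  with step assms(1,4) \<open>0 \<le> v\<close>
  show "ft_valid d \<tau> (j', \<rho>')" "(j, \<rho>) \<le> (j', \<rho>')" "(j', \<rho>') \<le> (Suc j, 0)"
    "0 \<le> f'" "f' \<le> f"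
    by (auto simp: D_def split: if_splits)
qed

lemma ft_step_mono:
  assumes "ft_valid d \<tau> (j, \<rho>)" "0 \<le> \<sigma>" "\<sigma> \<le> \<rho>" "0 \<le> g" "g \<le> f"
    and "0 \<le> wt (\<tau> j)" "wt (\<tau> j) \<le> w (\<tau> j)"
    and "0 \<le> d (\<tau> (Suc j)) (\<tau> (Suc (Suc j)))"
    and "ft_step d \<tau> w (j, \<rho>, f) = (j', \<rho>', f')"
    and "ft_step d \<tau> wt (j, \<sigma>, g) = (k', \<sigma>', g')"
  shows "(k', \<sigma>') \<le> (j', \<rho>')" "g' \<le> f'"
proof -
  define D v u l m where "D = d (\<tau> j) (\<tau> (Suc j))" and "v = w (\<tau> j)" and "u = wt (\<tau> j)"
    and "l = step_fraction D \<rho> v f" and "m = step_fraction D \<sigma> u g"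
  have step: "(j', \<rho>', f') =
      (if \<rho> + l * v = D then (Suc j, 0, f - l) else (j, \<rho> + l * v, f - l))"
    using assms(9) unfolding ft_step_eq Let_def D_def v_def l_def by (rule sym)
  have step_t: "(k', \<sigma>', g') =
      (if \<sigma> + m * u = D then (Suc j, 0, g - m) else (j, \<sigma> + m * u, g - m))"
    using assms(10) unfolding ft_step_eq Let_def D_def u_def m_def by (rule sym)
  have hyps: "\<sigma> \<le> \<rho>" "\<rho> \<le> D" "0 \<le> u" "u \<le> v" "0 \<le> g" "g \<le> f"
    using assms(1-7) by (simp_all add: D_def u_def v_def)
  show "g' \<le> f'"
    using step step_t step_fraction_remaining_mono[OF hyps]
    by (simp add: l_def m_def split: if_splits)
  show "(k', \<sigma>') \<le> (j', \<rho>')"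
  proof (cases "\<rho> + l * v = D")
    case True
    have "ft_valid d \<tau> (j, \<sigma>)" using assms(1-3) by simp
    then have "(k', \<sigma>') \<le> (Suc j, 0)"
      using assms(4,6,8,10) by (rule ft_step_progress)
    with True step show ?thesis by simp
  next
    case False
    then have "l = f"
      using step_fraction_eq_if_segment_unfinished by (simp add: l_def)
    have unfinished: "\<rho> + l * v < D"
      using False step_fraction_within_segment[of \<rho> D v f] hyps by (simp add: l_def)
    have "0 \<le> m" "m \<le> g"
      using step_fraction_bounds hyps assms(2) by (auto simp: m_def)
    then have "\<sigma> + m * u \<le> \<rho> + l * v"
      using hyps \<open>l = f\<close> by (simp add: add_mono mult_mono)
    with False step step_t unfinished show ?thesis by auto
  qed
qed

lemma ft_loop_progress:
  assumes "ft_loop d \<tau> w (j, \<rho>, f) r" "ft_valid d \<tau> (j, \<rho>)" "0 \<le> f"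
    and "\<forall>i\<ge>1. 0 \<le> d (\<tau> i) (\<tau> (Suc i))" "\<forall>i\<ge>1. 0 \<le> w (\<tau> i)"
  shows "ft_valid d \<tau> r \<and> (j, \<rho>) \<le> r"
  using assms(1-3)
proof (induction "(j, \<rho>, f)" r arbitrary: j \<rho> f rule: ft_loop.induct)
  case (stop f j \<rho>)
  then show ?case by simp
next
  case (iter f j \<rho> r)
  obtain j' \<rho>' f' where step: "ft_step d \<tau> w (j, \<rho>, f) = (j', \<rho>', f')"
    by (metis prod_cases3)
  have "ft_valid d \<tau> (j', \<rho>')" "(j, \<rho>) \<le> (j', \<rho>')" "0 \<le> f'"
    using ft_step_progress[OF iter.prems _ _ step] assms(4,5) iter.prems(1) by auto
  with iter.hyps(3)[OF step] show ?case by (blast intro: order_trans)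
qed

lemma ft_loop_mono:
  assumes "ft_loop d \<tau> wt (k, \<sigma>, g) rt" "ft_loop d \<tau> w (j, \<rho>, f) r"
    and "ft_valid d \<tau> (k, \<sigma>)" "ft_valid d \<tau> (j, \<rho>)" "(k, \<sigma>) \<le> (j, \<rho>)"
    and "0 \<le> g" "g \<le> f"
    and dist: "\<forall>i\<ge>1. 0 \<le> d (\<tau> i) (\<tau> (Suc i))"
    and weights: "\<forall>i\<ge>1. 0 \<le> wt (\<tau> i) \<and> wt (\<tau> i) \<le> w (\<tau> i)"
  shows "rt \<le> r"
  using assms(1-7)
proof (induction "(k, \<sigma>, g)" rt arbitrary: k \<sigma> g j \<rho> f rule: ft_loop.induct)
  case (stop g k \<sigma>)
  have "(j, \<rho>) \<le> r"
    using ft_loop_progress[OF stop.prems(1,3)] stop.prems dist weights by force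
  with stop.prems(4) show ?case by (rule order_trans)
next
  case (iter g k \<sigma> rt)
  have "0 \<le> wt (\<tau> k)" "1 \<le> k" using iter.prems(2) weights by auto
  obtain k' \<sigma>' g' where step_t: "ft_step d \<tau> wt (k, \<sigma>, g) = (k', \<sigma>', g')"
    by (metis prod_cases3)
  note progress_t = ft_step_progress[OF iter.prems(2) iter.prems(5)
      \<open>0 \<le> wt (\<tau> k)\<close> _ step_t]
  have valid_t: "ft_valid d \<tau> (k', \<sigma>')" "0 \<le> g'" "g' \<le> g"
    using progress_t dist \<open>1 \<le> k\<close> by auto
  consider (behind) "k < j" | (level) "k = j" "\<sigma> \<le> \<rho>"
    using iter.prems(4) by force
  then show ?case
  proof cases
    case behind
    have "(k', \<sigma>') \<le> (Suc k, 0)" using progress_t dist \<open>1 \<le> k\<close> by auto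
    also have "(Suc k, 0) \<le> (j, \<rho>)" using behind iter.prems(3) by auto
    finally show ?thesis
      using iter.hyps(3)[OF step_t iter.prems(1) valid_t(1) iter.prems(3)] valid_t iter.prems(6)
      by simp
  next
    case level
    obtain j' \<rho>' f' where step: "ft_step d \<tau> w (j, \<rho>, f) = (j', \<rho>', f')"
      by (metis prod_cases3)
    have "0 < f" using iter.hyps(1) iter.prems(6) by linarith
    have loop': "ft_loop d \<tau> w (j', \<rho>', f') r"
      using iter.prems(1) \<open>0 < f\<close> step by (cases rule: ft_loop.cases) auto
    have "0 \<le> w (\<tau> j)" using weights level \<open>1 \<le> k\<close> by force
    then have valid': "ft_valid d \<tau> (j', \<rho>')"
      using ft_step_progress[OF iter.prems(3) _ _ _ step] dist level \<open>0 < f\<close> \<open>1 \<le> k\<close> by auto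
    have "0 \<le> \<sigma>" using iter.prems(2) by simp
    have "wt (\<tau> j) \<le> w (\<tau> j)" "0 \<le> d (\<tau> (Suc j)) (\<tau> (Suc (Suc j)))"
      using weights dist level \<open>1 \<le> k\<close> by auto
    moreover have step_t': "ft_step d \<tau> wt (j, \<sigma>, g) = (k', \<sigma>', g')"
      using step_t level by simp
    ultimately have "(k', \<sigma>') \<le> (j', \<rho>')" "g' \<le> f'"
      using ft_step_mono[OF iter.prems(3) \<open>0 \<le> \<sigma>\<close> level(2) iter.prems(5,6) _ _ _ step]
        \<open>0 \<le> wt (\<tau> k)\<close> level by simp_all
    then show ?thesis
      using iter.hyps(3)[OF step_t loop' valid_t(1) valid'] valid_t by simp
  qed
qed

lemma ft_after_mono:
  assumes "ft_after d \<tau> w i a" "ft_after d \<tau> wt i b" "i \<le> n"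
    and dist: "\<forall>j\<ge>1. 0 \<le> d (\<tau> j) (\<tau> (Suc j))"
    and weights: "\<forall>i\<in>{1..n}. \<forall>j\<ge>1. 0 \<le> wt i (\<tau> j) \<and> wt i (\<tau> j) \<le> w i (\<tau> j)"
  shows "b \<le> a \<and> ft_valid d \<tau> a \<and> ft_valid d \<tau> b"
  using assms(1-3)
proof (induction i arbitrary: a b)
  case 0
  then have "a = (1, 0)" "b = (1, 0)" by (auto elim: ft_after.cases)
  then show ?case using dist by simp
next
  case (Suc i)
  obtain j \<rho> where after: "ft_after d \<tau> w i (j, \<rho>)"
    and loop: "ft_loop d \<tau> (w (Suc i)) (j, \<rho>, 1) a"
    using Suc.prems(1) by (cases rule: ft_after.cases) auto
  obtain k \<sigma> where after_t: "ft_after d \<tau> wt i (k, \<sigma>)"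
    and loop_t: "ft_loop d \<tau> (wt (Suc i)) (k, \<sigma>, 1) b"
    using Suc.prems(2) by (cases rule: ft_after.cases) auto
  have IH: "(k, \<sigma>) \<le> (j, \<rho>)" "ft_valid d \<tau> (j, \<rho>)" "ft_valid d \<tau> (k, \<sigma>)"
    using Suc.IH[OF after after_t] Suc.prems(3) by auto
  have task: "\<forall>j\<ge>1. 0 \<le> wt (Suc i) (\<tau> j) \<and> wt (Suc i) (\<tau> j) \<le> w (Suc i) (\<tau> j)"
    using weights Suc.prems(3) by auto
  then have "\<forall>j\<ge>1. 0 \<le> w (Suc i) (\<tau> j)" "\<forall>j\<ge>1. 0 \<le> wt (Suc i) (\<tau> j)"
    by force+
  then show ?case
    using ft_loop_mono[OF loop_t loop IH(3,2,1) _ _ dist task]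
      ft_loop_progress[OF loop IH(2) _ dist] ft_loop_progress[OF loop_t IH(3) _ dist]
    by simp
qed

lemma ft_work_mono:
  assumes "ft_valid d \<tau> (k, \<sigma>)" "ft_valid d \<tau> (j, \<rho>)" "(k, \<sigma>) \<le> (j, \<rho>)"
    and dist: "\<forall>i\<ge>1. 0 \<le> d (\<tau> i) (\<tau> (Suc i))"
  shows "delta d \<tau> 1 k + \<sigma> \<le> delta d \<tau> 1 j + \<rho>"
proof (cases "k < j")
  case True
  let ?D = "\<lambda>i. d (\<tau> i) (\<tau> (Suc i))"
  have "1 \<le> k" using assms(1) by simp
  have "\<sigma> \<le> ?D k" using assms(1) by simp
  also have "\<dots> \<le> sum ?D {k..<j}"
    using True dist \<open>1 \<le> k\<close> by (intro member_le_sum) auto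
  finally have "delta d \<tau> 1 k + \<sigma> \<le> sum ?D {1..<k} + sum ?D {k..<j}"
    using \<open>1 \<le> k\<close> by (simp add: delta_def)
  also have "\<dots> = delta d \<tau> 1 j"
    using \<open>1 \<le> k\<close> True by (simp add: delta_def sum.atLeastLessThan_concat)
  finally show ?thesis using assms(2) by simp
next
  case False
  then show ?thesis using assms(3) by simp
qed

theorem lemma1:
  fixes m n :: nat and d :: "nat \<Rightarrow> nat \<Rightarrow> real" and \<tau> :: "nat \<Rightarrow> nat"
    and w wt :: "nat \<Rightarrow> nat \<Rightarrow> real" and W Wt :: real
  assumes "is_mts m d"
    and "\<forall>j\<ge>1. \<tau> j \<in> {1..m}"
    and "\<forall>i\<in>{1..n}. \<forall>s\<in>{1..m}. 0 \<le> wt i s \<and> wt i s \<le> w i s"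
    and "ft_total_work d \<tau> w n W"
    and "ft_total_work d \<tau> wt n Wt"
  shows "Wt \<le> W"
proof -
  have dist: "\<forall>j\<ge>1. 0 \<le> d (\<tau> j) (\<tau> (Suc j))"
    using assms(1,2) unfolding is_mts_def by auto
  have weights: "\<forall>i\<in>{1..n}. \<forall>j\<ge>1. 0 \<le> wt i (\<tau> j) \<and> wt i (\<tau> j) \<le> w i (\<tau> j)"
    using assms(2,3) by blast
  obtain j \<rho> where after: "ft_after d \<tau> w n (j, \<rho>)" and W: "W = delta d \<tau> 1 j + \<rho>"
    using assms(4) unfolding ft_total_work_def by auto
  obtain k \<sigma> where after_t: "ft_after d \<tau> wt n (k, \<sigma>)" and Wt: "Wt = delta d \<tau> 1 k + \<sigma>"
    using assms(5) unfolding ft_total_work_def by auto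
  have "(k, \<sigma>) \<le> (j, \<rho>)" "ft_valid d \<tau> (j, \<rho>)" "ft_valid d \<tau> (k, \<sigma>)"
    using ft_after_mono[OF after after_t order_refl dist weights] by auto
  then show ?thesis
    unfolding W Wt using ft_work_mono dist by blast
qed

end
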